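(* $\widehat{\mathbb{C}^{\mathcal{D}_0}}$ is an algebraically closed field, $\widehat{\mathbb{R}^{\mathcal{D}_0}}$ is a real closed field, and $\widehat{\mathbb{C}^{\mathcal{D}_0}}=\widehat{\mathbb{R}^{\mathcal{D}_0}}\oplus i\,\widehat{\mathbb{R}^{\mathcal{D}_0}}$.
   Context: Fix $d\in\mathbb{N}$ and let $\mathcal{D}_0=\mathcal{D}(\mathbb{R}^d)$ (compactly supported $C^\infty$ functions $\mathbb{R}^d\to\mathbb{C}$). For $\varphi\in\mathcal{D}_0$ let $R_\varphi=\sup\{\|x\|:\varphi(x)\neq0\}$ if $\varphi\neq0$, $R_0=1$. For $n\in\mathbb{N}$, $\mathcal{D}_n$ is the set of $\varphi\in\mathcal{D}_0$ that are real-valued, even, with $R_\varphi\le1/n$, $\int\varphi=1$, $\int x^\alpha\varphi(x)dx=0$ for $1\le|\alpha|\le n$, $\int|\varphi|\le1+1/n$, and $\sup_x|\partial^\alpha\varphi(x)|\le R_\varphi^{-2(|\alpha|+d)}$ for $|\alpha|\le n$. Let $\mathfrak c=\mathrm{card}(\mathbb{R})$ and let $\mathcal{U}$ be a fixed free ultrafilter on $\mathcal{D}_0$ containing every $\mathcal{D}_n$ and which is $\mathfrak{c}^+$-good (for every $\Gamma\subseteq\mathcal{D}_0$ with $\mathrm{card}\,\Gamma\le\mathfrak c$ and every map $R$ from finite subsets of $\Gamma$ into $\mathcal{U}$ with $X\subseteq Y\Rightarrow R(X)\supseteq R(Y)$, there is a map $S$ from finite subsets of $\Gamma$ into $\mathcal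 U$ with $S(X\cup Y)=S(X)\cap S(Y)$ and $S(X)\subseteq R(X)$). A property $P(\varphi)$ holds a.e. if $\{\varphi\in\mathcal{D}_0:P(\varphi)\}\in\mathcal{U}$. A net is a map $\mathcal{D}_0\to\mathbb{C}$, written $(A_\varphi)$. $\mathcal{M}(\mathbb{C}^{\mathcal{D}_0})$ is the set of nets for which there is $m\in\mathbb{N}$ with $|A_\varphi|\le R_\varphi^{-m}$ a.e.; $\mathcal{N}(\mathbb{C}^{\mathcal{D}_0})$ is the set of nets with $|A_\varphi|<R_\varphi^{p}$ a.e. for every $p\in\mathbb{N}$. $\widehat{\mathbb{C}^{\mathcal{D}_0}}=\mathcal{M}(\mathbb{C}^{\mathcal{D}_0})/\mathcal{N}(\mathbb{C}^{\mathcal{D}_0})$ with pointwise ring operations; $\widehat{A_\varphi}$ is the class of $(A_\varphi)$; $\widehat{\mathbb{R}^{\mathcal{D}_0}}$ is the set of classes of real-valued moderate nets. $\mathbb{C}$ embeds via constant nets. *)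

theory Defs
  imports "HOL-Analysis.Analysis" "HOL-Algebra.Algebraic_Closure"
begin

type_synonym 'd tf = "real^'d \<Rightarrow> complex"
type_synonym 'd net = "'d tf \<Rightarrow> complex"

definition pdir :: "'d::finite \<Rightarrow> 'd tf \<Rightarrow> 'd tf" where
  "pdir i f = (\<lambda>x. frechet_derivative f (at x) (axis i 1))"

fun pdirs :: "'d::finite list \<Rightarrow> 'd tf \<Rightarrow> 'd tf" where
  "pdirs [] f = f"
| "pdirs (i # is) f = pdir i (pdirs is f)"

definition smooth_fn :: "'d::finite tf \<Rightarrow> bool" where
  "smooth_fn f \<longleftrightarrow> (\<forall>is x. pdirs is f differentiable (at x))"

definition testfns :: "'d::finite tf set" where
  "testfns = {f. smooth_fn f \<and> compact (closure {x. f x \<noteq> 0})}"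

definition Rphi :: "'d::finite tf \<Rightarrow> real" where
  "Rphi f = (if f = (\<lambda>_. 0) then 1 else Sup {norm x | x. f x \<noteq> 0})"

definition Dn :: "nat \<Rightarrow> 'd::finite tf set" where
  "Dn n = {\<phi> \<in> testfns.
     (\<forall>x. Im (\<phi> x) = 0) \<and> (\<forall>x. \<phi> (- x) = \<phi> x) \<and>
     Rphi \<phi> \<le> 1 / real n \<and>
     (LINT x|lborel. \<phi> x) = 1 \<and>
     (\<forall>\<alpha>::'d \<Rightarrow> nat. 1 \<le> sum \<alpha> UNIV \<and> sum \<alpha> UNIV \<le> n \<longrightarrow>
        (LINT x|lborel. complex_of_real (\<Prod>i\<in>UNIV. (x $ i) ^ \<alpha> i) * \<phi> x) = 0) \<and>
     (LINT x|lborel. norm (\<phi> x)) \<le> 1 + 1 / real n \<and>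
     (\<forall>is. length is \<le> n \<longrightarrow>
        (\<forall>x. norm (pdirs is \<phi> x) \<le> inverse (Rphi \<phi> ^ (2 * (length is + CARD('d))))))}"

definition free_ultrafilter_on :: "'a set \<Rightarrow> 'a set set \<Rightarrow> bool" where
  "free_ultrafilter_on D U \<longleftrightarrow>
     U \<subseteq> Pow D \<and> D \<in> U \<and> {} \<notin> U \<and>
     (\<forall>A B. A \<in> U \<and> B \<in> U \<longrightarrow> A \<inter> B \<in> U) \<and>
     (\<forall>A B. A \<in> U \<and> A \<subseteq> B \<and> B \<subseteq> D \<longrightarrow> B \<in> U) \<and>
     (\<forall>A. A \<subseteq> D \<longrightarrow> A \<in> U \<or> D - A \<in> U) \<and>
     \<Inter>U = {}"

definition cplus_good :: "'a set \<Rightarrow> 'a set set \<Rightarrow> bool" where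
  "cplus_good D U \<longleftrightarrow>
     (\<forall>(\<Gamma>::'a set) (R::'a set \<Rightarrow> 'a set).
        \<Gamma> \<subseteq> D \<and> (\<exists>f::'a \<Rightarrow> real. inj_on f \<Gamma>) \<and>
        (\<forall>F1. finite F1 \<and> F1 \<subseteq> \<Gamma> \<longrightarrow> R F1 \<in> U) \<and>
        (\<forall>F1 F2. finite F2 \<and> F1 \<subseteq> F2 \<and> F2 \<subseteq> \<Gamma> \<longrightarrow> R F2 \<subseteq> R F1)
      \<longrightarrow> (\<exists>S::'a set \<Rightarrow> 'a set.
            (\<forall>F1. finite F1 \<and> F1 \<subseteq> \<Gamma> \<longrightarrow> S F1 \<in> U \<and> S F1 \<subseteq> R F1) \<and>
            (\<forall>F1 F2. finite F1 \<and> finite F2 \<and> F1 \<subseteq> \<Gamma> \<and> F2 \<subseteq> \<Gamma> \<longrightarrow>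
               S (F1 \<union> F2) = S F1 \<inter> S F2)))"

definition moderate :: "'d::finite tf set set \<Rightarrow> 'd net \<Rightarrow> bool" where
  "moderate U A \<longleftrightarrow>
     (\<exists>m::nat. {\<phi> \<in> testfns. norm (A \<phi>) \<le> inverse (Rphi \<phi> ^ m)} \<in> U)"

definition negligible_net :: "'d::finite tf set set \<Rightarrow> 'd net \<Rightarrow> bool" where
  "negligible_net U A \<longleftrightarrow>
     (\<forall>p::nat. {\<phi> \<in> testfns. norm (A \<phi>) < Rphi \<phi> ^ p} \<in> U)"

definition cls :: "'d::finite tf set set \<Rightarrow> 'd net \<Rightarrow> 'd net set" where
  "cls U A = {B. moderate U B \<and> negligible_net U (\<lambda>\<phi>. B \<phi> - A \<phi>)}"

definition Chat :: "'d::finite tf set set \<Rightarrow> 'd net set ring" where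
  "Chat U = \<lparr> carrier = cls U ` {A. moderate U A},
     mult = (\<lambda>P Q. {C. moderate U C \<and>
               (\<exists>A\<in>P. \<exists>B\<in>Q. negligible_net U (\<lambda>\<phi>. C \<phi> - A \<phi> * B \<phi>))}),
     one = cls U (\<lambda>_. 1),
     zero = cls U (\<lambda>_. 0),
     add = (\<lambda>P Q. {C. moderate U C \<and>
               (\<exists>A\<in>P. \<exists>B\<in>Q. negligible_net U (\<lambda>\<phi>. C \<phi> - (A \<phi> + B \<phi>)))}) \<rparr>"

definition Rhat :: "'d::finite tf set set \<Rightarrow> 'd net set set" where
  "Rhat U = cls U ` {A. moderate U A \<and> (\<forall>\<phi>. A \<phi> \<in> \<real>)}"

text \<open>Real closed field (Artin-Schreier characterisation without reference to an order):
  formally real, every element or its negative is a square, odd degree polynomials have a root.\<close>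
definition real_closed :: "('a, 'b) ring_scheme \<Rightarrow> bool" where
  "real_closed R \<longleftrightarrow> field R \<and>
     (\<forall>(n::nat) f. f \<in> {..<n} \<rightarrow> carrier R \<longrightarrow>
        finsum R (\<lambda>k. f k \<otimes>\<^bsub>R\<^esub> f k) {..<n} \<noteq> \<ominus>\<^bsub>R\<^esub> \<one>\<^bsub>R\<^esub>) \<and>
     (\<forall>a\<in>carrier R. \<exists>b\<in>carrier R. b \<otimes>\<^bsub>R\<^esub> b = a \<or> b \<otimes>\<^bsub>R\<^esub> b = \<ominus>\<^bsub>R\<^esub> a) \<and>
     (\<forall>p\<in>carrier (poly_ring R). odd (Polynomials.degree p) \<longrightarrow>
        (\<exists>x\<in>carrier R. ring.eval R p x = \<zero>\<^bsub>R\<^esub>))"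

end

theory Submission
  imports Defs "HOL-Computational_Algebra.Fundamental_Theorem_Algebra"
begin

text \<open>Moderate nets modulo negligible nets form a commutative ring \<open>\<C>\<close>; a moderate net that is
  not negligible is bounded below by some \<open>R\<^sub>\<phi>\<^sup>q\<close> along the ultrafilter, hence invertible, so
  \<open>\<C>\<close> is a field. Given a polynomial over \<open>\<C>\<close>, choose representatives of the coefficients and,
  for every \<open>\<phi>\<close>, a complex (for real coefficients and odd degree: a real) root of the
  polynomial with coefficients evaluated at \<open>\<phi>\<close>. Cauchy's bound on the roots shows that the
  chosen net is moderate, so its class is a root in \<open>\<C>\<close>. Formal reality of \<open>\<R>\<close> and the existence
  of square roots of \<open>\<plusminus>a\<close> are read off pointwise, the ultrafilter deciding the sign of a
  real net. Splitting a net into its real and imaginary part gives \<open>\<C> = \<R> \<oplus> i\<R>\<close>, since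
  \<open>|Re z|, |Im z| \<le> |z|\<close> make the splitting compatible with negligibility.\<close>

section \<open>Polynomials given by coefficient lists\<close>

text \<open>Coefficients are listed with the leading one first, as for \<open>ring.eval\<close> in HOL-Algebra.\<close>

fun eval_coeffs :: "'a::comm_ring_1 list \<Rightarrow> 'a \<Rightarrow> 'a" where
  "eval_coeffs [] z = 0"
| "eval_coeffs (a # as) z = a * z ^ length as + eval_coeffs as z"

lemma norm_eval_coeffs_le:
  fixes z :: "'a::real_normed_field"
  shows "norm (eval_coeffs bs z) \<le> sum_list (map norm bs) * (max 1 (norm z)) ^ (length bs - 1)"
proof (induction bs)
  case (Cons b cs)
  let ?M = "max 1 (norm z)"
  have "norm (eval_coeffs (b # cs) z) \<le> norm b * norm z ^ length cs + norm (eval_coeffs cs z)"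
    by (simp add: norm_triangle_le norm_mult norm_power)
  also have "norm b * norm z ^ length cs \<le> norm b * ?M ^ length cs"
    by (intro mult_left_mono power_mono) auto
  also have "norm (eval_coeffs cs z) \<le> sum_list (map norm cs) * ?M ^ (length cs - 1)"
    using Cons.IH .
  also have "\<dots> \<le> sum_list (map norm cs) * ?M ^ length cs"
    by (intro mult_left_mono power_increasing) (auto intro!: sum_list_nonneg)
  finally show ?case by (simp add: algebra_simps)
qed simp

lemma norm_root_le_Cauchy_bound:
  fixes z :: "'a::real_normed_field"
  assumes a: "a \<noteq> 0" and root: "eval_coeffs (a # bs) z = 0"
  shows "norm z \<le> 1 + sum_list (map norm bs) / norm a"
proof (cases "norm z \<le> 1")
  case True
  have "0 \<le> sum_list (map norm bs) / norm a" by (intro divide_nonneg_nonneg sum_list_nonneg) auto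
  then show ?thesis using True by linarith
next
  case False
  let ?S = "sum_list (map norm bs)" and ?n = "length bs"
  have "bs \<noteq> []" using root a by auto
  hence n: "?n = Suc (?n - 1)" by (cases bs) auto
  have M: "max 1 (norm z) = norm z" using False by simp
  have "a * z ^ ?n = - eval_coeffs bs z" using root by (simp add: eq_neg_iff_add_eq_0)
  hence "norm a * norm z ^ ?n \<le> ?S * norm z ^ (?n - 1)"
    using norm_eval_coeffs_le[of bs z] M by (metis norm_minus_cancel norm_mult norm_power)
  hence "norm a * norm z * norm z ^ (?n - 1) \<le> ?S * norm z ^ (?n - 1)"
    by (subst (asm) n) (simp add: algebra_simps)
  moreover have "0 < norm z ^ (?n - 1)" using False by (intro zero_less_power) linarith
  ultimately have "norm a * norm z \<le> ?S" by simp
  hence "norm z \<le> ?S / norm a" using a by (simp add: field_simps)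
  then show ?thesis by simp
qed

lemma eval_coeffs_of_real:
  "eval_coeffs (map of_real xs) (of_real x) = of_real (eval_coeffs xs x)"
  by (induction xs) simp_all

fun coeffs_poly :: "'a::comm_ring_1 list \<Rightarrow> 'a poly" where
  "coeffs_poly [] = 0"
| "coeffs_poly (a # as) = Polynomial.monom a (length as) + coeffs_poly as"

lemma poly_coeffs_poly: "poly (coeffs_poly as) z = eval_coeffs as z"
  by (induction as) (auto simp: poly_monom)

lemma degree_coeffs_poly_le: "Polynomial.degree (coeffs_poly as) \<le> length as - 1"
proof (induction as)
  case (Cons a as)
  have "Polynomial.degree (coeffs_poly (a # as))
      \<le> max (Polynomial.degree (Polynomial.monom a (length as))) (Polynomial.degree (coeffs_poly as))"
    by (simp add: degree_add_le_max)
  also have "\<dots> \<le> length as" using Cons.IH degree_monom_le[of a "length as"] by auto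
  finally show ?case by simp
qed simp

lemma eval_coeffs_complex_root_exists:
  fixes a :: complex
  assumes "a \<noteq> 0" "bs \<noteq> []"
  shows "\<exists>z. eval_coeffs (a # bs) z = 0"
proof -
  have "Polynomial.degree (coeffs_poly bs) < length bs"
    using degree_coeffs_poly_le[of bs] assms(2) by (cases bs) auto
  hence "Polynomial.degree (coeffs_poly (a # bs)) = length bs"
    using assms(1) by (simp add: degree_add_eq_left degree_monom_eq)
  hence "\<not> constant (poly (coeffs_poly (a # bs)))"
    using assms(2) by (simp add: constant_degree)
  then obtain z where "poly (coeffs_poly (a # bs)) z = 0"
    using fundamental_theorem_of_algebra by blast
  thus ?thesis by (metis poly_coeffs_poly)
qed

lemma continuous_on_eval_coeffs: "continuous_on S (\<lambda>x::real. eval_coeffs as x)"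
  by (induction as) (auto intro!: continuous_intros)

lemma eval_coeffs_real_root_exists:
  fixes a :: real
  assumes a: "a \<noteq> 0" and odd: "odd (length bs)"
  shows "\<exists>x. eval_coeffs (a # bs) x = 0"
proof -
  let ?S = "sum_list (map norm bs)" and ?n = "length bs"
  define T where "T = 1 + ?S / \<bar>a\<bar>"
  have "0 \<le> ?S / \<bar>a\<bar>" by (intro divide_nonneg_nonneg sum_list_nonneg) auto
  hence T1: "1 \<le> T" unfolding T_def by simp
  have aT: "?S < \<bar>a\<bar> * T" unfolding T_def using a by (simp add: distrib_left)
  text \<open>At \<open>\<plusminus>T\<close> the leading term dominates, so the polynomial changes sign on \<open>[-T, T]\<close>.\<close>
  have dominant: "\<bar>eval_coeffs bs t\<bar> < \<bar>a\<bar> * T ^ ?n" if "\<bar>t\<bar> = T" for t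
  proof -
    have n: "?n = Suc (?n - 1)" using odd by (cases bs) auto
    have "\<bar>eval_coeffs bs t\<bar> \<le> ?S * T ^ (?n - 1)"
      using norm_eval_coeffs_le[of bs t] that T1 by (simp add: max_def)
    also have "\<dots> < \<bar>a\<bar> * T * T ^ (?n - 1)"
      using aT T1 by (intro mult_strict_right_mono) auto
    also have "\<dots> = \<bar>a\<bar> * T ^ ?n" by (subst (2) n) (simp add: algebra_simps)
    finally show ?thesis .
  qed
  have at_T: "eval_coeffs (a # bs) T = a * T ^ ?n + eval_coeffs bs T"
    and at_minus_T: "eval_coeffs (a # bs) (-T) = - (a * T ^ ?n) + eval_coeffs bs (-T)"
    using odd by (simp_all add: power_minus_odd)
  have k1: "\<bar>eval_coeffs bs T\<bar> < \<bar>a\<bar> * T ^ ?n" and k2: "\<bar>eval_coeffs bs (-T)\<bar> < \<bar>a\<bar> * T ^ ?n"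
    using dominant[of T] dominant[of "-T"] T1 by simp_all
  have le: "-T \<le> T" using T1 by simp
  show ?thesis
  proof (cases "a > 0")
    case True
    have "eval_coeffs (a # bs) (-T) \<le> 0" "0 \<le> eval_coeffs (a # bs) T"
      using k1 k2 True at_T at_minus_T by (auto simp: abs_less_iff)
    then show ?thesis using IVT'[OF _ _ le continuous_on_eval_coeffs] by blast
  next
    case False
    hence "a < 0" using a by simp
    hence "0 \<le> eval_coeffs (a # bs) (-T)" "eval_coeffs (a # bs) T \<le> 0"
      using k1 k2 at_T at_minus_T by (auto simp: abs_less_iff abs_of_neg)
    then show ?thesis using IVT2'[OF _ _ le continuous_on_eval_coeffs] by blast
  qed
qed

lemma obtain_map_preimage:
  assumes "set xs \<subseteq> f ` A"
  obtains ys where "set ys \<subseteq> A" "xs = map f ys"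
proof -
  have "\<exists>ys. set ys \<subseteq> A \<and> xs = map f ys" using assms
  proof (induction xs)
    case (Cons x xs)
    then obtain y ys where "y \<in> A" "x = f y" "set ys \<subseteq> A" "xs = map f ys" by auto
    then show ?case by (intro exI[of _ "y # ys"]) auto
  qed simp
  with that show ?thesis by blast
qed

lemma norm_Re_Im_diff_le:
  assumes "a \<in> \<real>" "b \<in> \<real>"
  shows "norm (a - complex_of_real (Re z)) \<le> norm (a + \<i> * b - z)"
    and "norm (b - complex_of_real (Im z)) \<le> norm (a + \<i> * b - z)"
proof -
  obtain ra rb where ab: "a = complex_of_real ra" "b = complex_of_real rb"
    using assms by (auto elim!: Reals_cases)
  have "norm (a - complex_of_real (Re z)) = \<bar>Re (a + \<i> * b - z)\<bar>"
    by (simp add: ab flip: of_real_diff)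
  also have "\<dots> \<le> norm (a + \<i> * b - z)" by (rule abs_Re_le_cmod)
  finally show "norm (a - complex_of_real (Re z)) \<le> norm (a + \<i> * b - z)" .
  have "norm (b - complex_of_real (Im z)) = \<bar>Im (a + \<i> * b - z)\<bar>"
    by (simp add: ab flip: of_real_diff)
  also have "\<dots> \<le> norm (a + \<i> * b - z)" by (rule abs_Im_le_cmod)
  finally show "norm (b - complex_of_real (Im z)) \<le> norm (a + \<i> * b - z)" .
qed

lemma add_less_power_if_le_half:
  fixes r x y :: real
  assumes "0 < r" "r \<le> 1/2" "x < r ^ Suc p" "y < r ^ Suc p"
  shows "x + y < r ^ p"
proof -
  have "2 * r * r ^ p \<le> 1 * r ^ p"
    using assms(1,2) by (intro mult_right_mono) auto
  thus ?thesis using assms(3,4) by simp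
qed

lemma add_le_inverse_power_if_le_half:
  fixes r a b :: real
  assumes "0 < r" "r \<le> 1/2" "a \<le> inverse r ^ m1" "b \<le> inverse r ^ m2"
  shows "a + b \<le> inverse r ^ Suc (m1 + m2)"
proof -
  have two: "2 \<le> inverse r"
    using le_imp_inverse_le[OF assms(2)] assms(1) by simp
  have "inverse r ^ m1 \<le> inverse r ^ (m1 + m2)" "inverse r ^ m2 \<le> inverse r ^ (m1 + m2)"
    using two by (intro power_increasing; simp)+
  hence "a + b \<le> 2 * inverse r ^ (m1 + m2)" using assms by simp
  also have "\<dots> \<le> inverse r * inverse r ^ (m1 + m2)"
    using two assms(1) by (intro mult_right_mono zero_le_power) auto
  finally show ?thesis by simp
qed

lemma mult_less_power_if_le_inverse_power:
  fixes r a b :: real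
  assumes "0 < r" "0 \<le> a" "0 \<le> b" "a \<le> inverse r ^ m" "b < r ^ (p + m)"
  shows "a * b < r ^ p"
proof -
  have "a * b \<le> inverse r ^ m * b" using assms by (intro mult_right_mono) auto
  also have "\<dots> < inverse r ^ m * r ^ (p + m)"
    using assms by (intro mult_strict_left_mono) auto
  also have "\<dots> = r ^ p" using assms(1) by (simp add: power_add field_simps power_inverse)
  finally show ?thesis .
qed

lemma Rphi_pos_if_integral_one:
  fixes \<phi> :: "'d::finite tf"
  assumes "\<phi> \<in> testfns" and int1: "(LINT x|lborel. \<phi> x) = 1"
  shows "0 < Rphi \<phi>"
proof -
  have nz: "\<phi> \<noteq> (\<lambda>_. 0)" using int1 by auto
  have "\<exists>x. x \<noteq> 0 \<and> \<phi> x \<noteq> 0"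
  proof (rule ccontr)
    assume "\<not> ?thesis"
    hence "AE x in lborel. \<phi> x = 0"
      using AE_lborel_singleton[of "0::real^'d"] by (auto elim: eventually_mono)
    hence "(LINT x|lborel. \<phi> x) = 0" by (rule integral_eq_zero_AE)
    thus False using int1 by simp
  qed
  then obtain x where x: "x \<noteq> 0" "\<phi> x \<noteq> 0" by blast
  have "compact (closure {x. \<phi> x \<noteq> 0})" using assms(1) by (simp add: testfns_def)
  hence "bounded {x. \<phi> x \<noteq> 0}"
    using compact_imp_bounded bounded_subset closure_subset by blast
  then obtain B where "\<forall>y\<in>{x. \<phi> x \<noteq> 0}. norm y \<le> B" by (auto simp: bounded_iff)
  hence "bdd_above {norm x | x. \<phi> x \<noteq> 0}" by (auto intro!: bdd_aboveI)
  hence "norm x \<le> Sup {norm x | x. \<phi> x \<noteq> 0}" using x by (auto intro!: cSup_upper)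
  moreover have "0 < norm x" using x by simp
  ultimately have "0 < Sup {norm x | x. \<phi> x \<noteq> 0}" by linarith
  thus ?thesis using nz by (simp add: Rphi_def)
qed

section \<open>Moderate and negligible nets along the ultrafilter\<close>

locale Dn_ultrafilter =
  fixes U :: "'d::finite tf set set"
  assumes free_ultrafilter: "free_ultrafilter_on testfns U"
    and Dn_in_U: "\<forall>n::nat. n \<ge> 1 \<longrightarrow> Dn n \<in> U"
begin

lemma testfns_in_U: "testfns \<in> U" and empty_notin_U: "{} \<notin> U"
  and Int_in_U: "A \<in> U \<Longrightarrow> B \<in> U \<Longrightarrow> A \<inter> B \<in> U"
  and superset_in_U: "A \<in> U \<Longrightarrow> A \<subseteq> B \<Longrightarrow> B \<subseteq> testfns \<Longrightarrow> B \<in> U"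
  and in_U_or_compl_in_U: "A \<subseteq> testfns \<Longrightarrow> A \<in> U \<or> testfns - A \<in> U"
  using free_ultrafilter unfolding free_ultrafilter_on_def by blast+

definition ufilter :: "'d tf filter" where
  "ufilter = Abs_filter (\<lambda>P. {\<phi>\<in>testfns. P \<phi>} \<in> U)"

lemma eventually_ufilter: "eventually P ufilter \<longleftrightarrow> {\<phi>\<in>testfns. P \<phi>} \<in> U"
  unfolding ufilter_def
proof (rule eventually_Abs_filter, rule is_filter.intro)
  show "{\<phi> \<in> testfns. True} \<in> U" using testfns_in_U by simp
next
  fix P Q assume "{\<phi> \<in> testfns. P \<phi>} \<in> U" "{\<phi> \<in> testfns. Q \<phi>} \<in> U"
  moreover have "{\<phi> \<in> testfns. P \<phi> \<and> Q \<phi>} = {\<phi> \<in> testfns. P \<phi>} \<inter> {\<phi> \<in> testfns. Q \<phi>}"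
    by auto
  ultimately show "{\<phi> \<in> testfns. P \<phi> \<and> Q \<phi>} \<in> U" using Int_in_U by simp
next
  fix P Q assume "\<forall>x. P x \<longrightarrow> Q x" "{\<phi> \<in> testfns. P \<phi>} \<in> U"
  thus "{\<phi> \<in> testfns. Q \<phi>} \<in> U" by (elim superset_in_U) auto
qed

lemma ufilter_ultra: "eventually P ufilter \<or> eventually (\<lambda>\<phi>. \<not> P \<phi>) ufilter"
proof -
  have "testfns - {\<phi>\<in>testfns. P \<phi>} = {\<phi>\<in>testfns. \<not> P \<phi>}" by auto
  thus ?thesis using in_U_or_compl_in_U[of "{\<phi>\<in>testfns. P \<phi>}"] unfolding eventually_ufilter by auto
qed

lemma ufilter_neq_bot: "\<not> eventually (\<lambda>_. False) ufilter"
  using empty_notin_U unfolding eventually_ufilter by simp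

lemma eventually_Rphi_pos: "\<forall>\<^sub>F \<phi> in ufilter. 0 < Rphi \<phi>"
proof -
  have "Dn 1 \<in> U" using Dn_in_U by simp
  moreover have "Dn 1 \<subseteq> {\<phi>\<in>testfns. 0 < Rphi \<phi>}"
    by (auto simp: Dn_def intro!: Rphi_pos_if_integral_one)
  ultimately show ?thesis unfolding eventually_ufilter by (rule superset_in_U) auto
qed

lemma eventually_Rphi_le:
  assumes "n \<ge> 1"
  shows "\<forall>\<^sub>F \<phi> in ufilter. Rphi \<phi> \<le> 1 / real n"
proof -
  have "Dn n \<in> U" using Dn_in_U assms by simp
  moreover have "Dn n \<subseteq> {\<phi>\<in>testfns. Rphi \<phi> \<le> 1 / real n}" by (auto simp: Dn_def)
  ultimately show ?thesis unfolding eventually_ufilter by (rule superset_in_U) auto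
qed

lemma eventually_Rphi_le_half: "\<forall>\<^sub>F \<phi> in ufilter. 0 < Rphi \<phi> \<and> Rphi \<phi> \<le> 1/2"
  using eventually_conj[OF eventually_Rphi_pos eventually_Rphi_le[of 2]] by simp

lemma moderate_iff: "moderate U A \<longleftrightarrow> (\<exists>m. \<forall>\<^sub>F \<phi> in ufilter. norm (A \<phi>) \<le> inverse (Rphi \<phi>) ^ m)"
  unfolding moderate_def eventually_ufilter by (simp add: power_inverse)

lemma negligible_iff: "negligible_net U A \<longleftrightarrow> (\<forall>p. \<forall>\<^sub>F \<phi> in ufilter. norm (A \<phi>) < Rphi \<phi> ^ p)"
  unfolding negligible_net_def eventually_ufilter by simp

lemma negligible_mono:
  assumes "negligible_net U B" "\<forall>\<^sub>F \<phi> in ufilter. norm (A \<phi>) \<le> norm (B \<phi>)"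
  shows "negligible_net U A"
  unfolding negligible_iff
proof
  fix p
  have "\<forall>\<^sub>F \<phi> in ufilter. norm (B \<phi>) < Rphi \<phi> ^ p" using assms(1) negligible_iff by blast
  with assms(2) show "\<forall>\<^sub>F \<phi> in ufilter. norm (A \<phi>) < Rphi \<phi> ^ p" by eventually_elim simp
qed

lemma negligible_if_eventually_zero:
  assumes "\<forall>\<^sub>F \<phi> in ufilter. A \<phi> = 0"
  shows "negligible_net U A"
  using eventually_conj[OF eventually_Rphi_pos assms] unfolding negligible_iff
  by (auto elim: eventually_mono)

lemma negligible_add:
  assumes "negligible_net U A" "negligible_net U B"
  shows "negligible_net U (\<lambda>\<phi>. A \<phi> + B \<phi>)"
  unfolding negligible_iff
proof
  fix p
  have "\<forall>\<^sub>F \<phi> in ufilter. norm (A \<phi>) < Rphi \<phi> ^ Suc p" "\<forall>\<^sub>F \<phi> in ufilter. norm (B \<phi>) < Rphi \<phi> ^ Suc p"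
    using assms negligible_iff by blast+
  with eventually_Rphi_le_half show "\<forall>\<^sub>F \<phi> in ufilter. norm (A \<phi> + B \<phi>) < Rphi \<phi> ^ p"
    by eventually_elim (rule le_less_trans[OF norm_triangle_ineq add_less_power_if_le_half], auto)
qed

lemma negligible_uminus: "negligible_net U A \<Longrightarrow> negligible_net U (\<lambda>\<phi>. - A \<phi>)"
  by (erule negligible_mono) simp

lemma negligible_diff:
  "negligible_net U A \<Longrightarrow> negligible_net U B \<Longrightarrow> negligible_net U (\<lambda>\<phi>. A \<phi> - B \<phi>)"
  using negligible_add[of A "\<lambda>\<phi>. - B \<phi>"] negligible_uminus[of B] by simp

lemma negligible_mult:
  assumes "moderate U A" "negligible_net U B"
  shows "negligible_net U (\<lambda>\<phi>. A \<phi> * B \<phi>)"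
  unfolding negligible_iff
proof
  fix p
  obtain m where "\<forall>\<^sub>F \<phi> in ufilter. norm (A \<phi>) \<le> inverse (Rphi \<phi>) ^ m"
    using assms(1) moderate_iff by blast
  moreover have "\<forall>\<^sub>F \<phi> in ufilter. norm (B \<phi>) < Rphi \<phi> ^ (p + m)"
    using assms(2) negligible_iff by blast
  ultimately show "\<forall>\<^sub>F \<phi> in ufilter. norm (A \<phi> * B \<phi>) < Rphi \<phi> ^ p"
    using eventually_Rphi_pos
    by eventually_elim (auto simp: norm_mult intro!: mult_less_power_if_le_inverse_power)
qed

lemma moderate_mono:
  assumes "moderate U B" "\<forall>\<^sub>F \<phi> in ufilter. norm (A \<phi>) \<le> norm (B \<phi>)"
  shows "moderate U A"
proof -
  obtain m where "\<forall>\<^sub>F \<phi> in ufilter. norm (B \<phi>) \<le> inverse (Rphi \<phi>) ^ m"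
    using assms(1) moderate_iff by blast
  with assms(2) have "\<forall>\<^sub>F \<phi> in ufilter. norm (A \<phi>) \<le> inverse (Rphi \<phi>) ^ m"
    by eventually_elim simp
  thus ?thesis using moderate_iff by blast
qed

lemma moderate_add:
  assumes "moderate U A" "moderate U B"
  shows "moderate U (\<lambda>\<phi>. A \<phi> + B \<phi>)"
proof -
  obtain m1 m2 where "\<forall>\<^sub>F \<phi> in ufilter. norm (A \<phi>) \<le> inverse (Rphi \<phi>) ^ m1"
    and "\<forall>\<^sub>F \<phi> in ufilter. norm (B \<phi>) \<le> inverse (Rphi \<phi>) ^ m2"
    using assms moderate_iff by blast
  with eventually_Rphi_le_half
  have "\<forall>\<^sub>F \<phi> in ufilter. norm (A \<phi> + B \<phi>) \<le> inverse (Rphi \<phi>) ^ Suc (m1 + m2)"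
    by eventually_elim (rule order.trans[OF norm_triangle_ineq add_le_inverse_power_if_le_half], auto)
  thus ?thesis using moderate_iff by blast
qed

lemma moderate_mult:
  assumes "moderate U A" "moderate U B"
  shows "moderate U (\<lambda>\<phi>. A \<phi> * B \<phi>)"
proof -
  obtain m1 m2 where "\<forall>\<^sub>F \<phi> in ufilter. norm (A \<phi>) \<le> inverse (Rphi \<phi>) ^ m1"
    and "\<forall>\<^sub>F \<phi> in ufilter. norm (B \<phi>) \<le> inverse (Rphi \<phi>) ^ m2"
    using assms moderate_iff by blast
  then have "\<forall>\<^sub>F \<phi> in ufilter. norm (A \<phi> * B \<phi>) \<le> inverse (Rphi \<phi>) ^ (m1 + m2)"
    by eventually_elim (simp add: norm_mult power_add mult_mono')
  thus ?thesis using moderate_iff by blast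
qed

lemma moderate_const: "moderate U (\<lambda>_. c)"
proof -
  define N where "N = nat \<lceil>norm c\<rceil> + 1"
  have N: "N \<ge> 1" "norm c \<le> real N" unfolding N_def by linarith+
  from eventually_Rphi_pos eventually_Rphi_le[OF N(1)]
  have "\<forall>\<^sub>F \<phi> in ufilter. norm c \<le> inverse (Rphi \<phi>) ^ 1"
  proof eventually_elim
    case (elim \<phi>)
    hence "inverse (1 / real N) \<le> inverse (Rphi \<phi>)" by (intro le_imp_inverse_le) auto
    thus ?case using N by simp
  qed
  thus ?thesis using moderate_iff by blast
qed

lemma moderate_uminus: "moderate U A \<Longrightarrow> moderate U (\<lambda>\<phi>. - A \<phi>)"
  by (erule moderate_mono) simp

lemma moderate_power: "moderate U Z \<Longrightarrow> moderate U (\<lambda>\<phi>. Z \<phi> ^ n)"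
  by (induction n) (auto intro: moderate_const moderate_mult)

lemmas moderate_intros = moderate_add moderate_mult moderate_const moderate_uminus

lemma moderate_of_real_norm: "moderate U A \<Longrightarrow> moderate U (\<lambda>\<phi>. complex_of_real (norm (A \<phi>)))"
  by (erule moderate_mono) simp

lemma moderate_of_real_Re: "moderate U A \<Longrightarrow> moderate U (\<lambda>\<phi>. complex_of_real (Re (A \<phi>)))"
  by (erule moderate_mono) (simp add: abs_Re_le_cmod)

lemma moderate_of_real_Im: "moderate U A \<Longrightarrow> moderate U (\<lambda>\<phi>. complex_of_real (Im (A \<phi>)))"
  by (erule moderate_mono) (simp add: abs_Im_le_cmod)

lemma moderate_sum_list_norm:
  "\<forall>A\<in>set As. moderate U A \<Longrightarrow>
   moderate U (\<lambda>\<phi>. complex_of_real (sum_list (map (\<lambda>A. norm (A \<phi>)) As)))"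
  by (induction As) (auto intro: moderate_const dest: moderate_add[OF moderate_of_real_norm])

lemma moderate_eval_coeffs:
  "\<forall>A\<in>set As. moderate U A \<Longrightarrow> moderate U Z \<Longrightarrow>
   moderate U (\<lambda>\<phi>. eval_coeffs (map (\<lambda>A. A \<phi>) As) (Z \<phi>))"
  by (induction As) (auto intro!: moderate_intros moderate_power)

text \<open>Maximality of the ultrafilter: a net that is not negligible is bounded below by a power
  of \<open>R\<^sub>\<phi>\<close>, hence eventually invertible with moderate inverse.\<close>

lemma bounded_below_if_not_negligible:
  assumes "\<not> negligible_net U A"
  obtains q where "\<forall>\<^sub>F \<phi> in ufilter. Rphi \<phi> ^ q \<le> norm (A \<phi>)"
proof -
  obtain p where "\<not> (\<forall>\<^sub>F \<phi> in ufilter. norm (A \<phi>) < Rphi \<phi> ^ p)"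
    using assms negligible_iff by blast
  hence "\<forall>\<^sub>F \<phi> in ufilter. \<not> norm (A \<phi>) < Rphi \<phi> ^ p" using ufilter_ultra by blast
  then have "\<forall>\<^sub>F \<phi> in ufilter. Rphi \<phi> ^ p \<le> norm (A \<phi>)" by (simp add: not_less)
  with that show ?thesis .
qed

lemma eventually_nonzero_if_bounded_below:
  assumes "\<forall>\<^sub>F \<phi> in ufilter. Rphi \<phi> ^ q \<le> norm (A \<phi>)"
  shows "\<forall>\<^sub>F \<phi> in ufilter. A \<phi> \<noteq> 0"
  using eventually_Rphi_pos assms
proof eventually_elim
  case (elim \<phi>)
  hence "0 < norm (A \<phi>)" by (meson less_le_trans zero_less_power)
  thus ?case by simp
qed

lemma moderate_inverse_if_bounded_below:
  assumes "\<forall>\<^sub>F \<phi> in ufilter. Rphi \<phi> ^ q \<le> norm (A \<phi>)"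
  shows "moderate U (\<lambda>\<phi>. inverse (A \<phi>))"
proof -
  from eventually_Rphi_pos assms
  have "\<forall>\<^sub>F \<phi> in ufilter. norm (inverse (A \<phi>)) \<le> inverse (Rphi \<phi>) ^ q"
  proof eventually_elim
    case (elim \<phi>)
    hence "inverse (norm (A \<phi>)) \<le> inverse (Rphi \<phi> ^ q)" by (intro le_imp_inverse_le) auto
    thus ?case by (simp add: norm_inverse power_inverse)
  qed
  thus ?thesis using moderate_iff by blast
qed

section \<open>The field of generalized complex numbers\<close>

lemma cls_refl: "moderate U A \<Longrightarrow> A \<in> cls U A"
  unfolding cls_def using negligible_if_eventually_zero[of "\<lambda>\<phi>. A \<phi> - A \<phi>"] by simp

lemma moderate_if_in_cls: "C \<in> cls U A \<Longrightarrow> moderate U C"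
  by (simp add: cls_def)

lemma negligible_diff_if_in_cls: "C \<in> cls U A \<Longrightarrow> negligible_net U (\<lambda>\<phi>. C \<phi> - A \<phi>)"
  by (simp add: cls_def)

lemma cls_eq_iff:
  assumes "moderate U A" "moderate U B"
  shows "cls U A = cls U B \<longleftrightarrow> negligible_net U (\<lambda>\<phi>. A \<phi> - B \<phi>)"
proof
  assume "cls U A = cls U B"
  then show "negligible_net U (\<lambda>\<phi>. A \<phi> - B \<phi>)"
    using cls_refl[OF assms(1)] negligible_diff_if_in_cls by blast
next
  assume AB: "negligible_net U (\<lambda>\<phi>. A \<phi> - B \<phi>)"
  have "negligible_net U (\<lambda>\<phi>. C \<phi> - B \<phi>) \<longleftrightarrow> negligible_net U (\<lambda>\<phi>. C \<phi> - A \<phi>)" for C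
    using negligible_add[OF _ AB, of "\<lambda>\<phi>. C \<phi> - A \<phi>"] negligible_diff[OF _ AB, of "\<lambda>\<phi>. C \<phi> - B \<phi>"]
    by auto
  then show "cls U A = cls U B" unfolding cls_def by blast
qed

lemma cls_eq_zero_iff: "moderate U A \<Longrightarrow> cls U A = cls U (\<lambda>_. 0) \<longleftrightarrow> negligible_net U A"
  using cls_eq_iff[OF _ moderate_const] by simp

lemma cls_eqI:
  "moderate U A \<Longrightarrow> moderate U B \<Longrightarrow> \<forall>\<^sub>F \<phi> in ufilter. A \<phi> = B \<phi> \<Longrightarrow> cls U A = cls U B"
  by (subst cls_eq_iff) (auto intro!: negligible_if_eventually_zero elim: eventually_mono)

lemma carrier_Chat: "carrier (Chat U) = cls U ` {A. moderate U A}"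
  by (simp add: Chat_def)

lemma one_Chat: "\<one>\<^bsub>Chat U\<^esub> = cls U (\<lambda>_. 1)" and zero_Chat: "\<zero>\<^bsub>Chat U\<^esub> = cls U (\<lambda>_. 0)"
  by (simp_all add: Chat_def)

lemma ChatE:
  assumes "x \<in> carrier (Chat U)"
  obtains A where "moderate U A" "x = cls U A"
  using assms by (auto simp: carrier_Chat)

lemma cls_in_carrier_Chat: "moderate U A \<Longrightarrow> cls U A \<in> carrier (Chat U)"
  by (simp add: carrier_Chat)

text \<open>Both operations of \<open>Chat\<close> are defined on arbitrary representatives; they agree
  with the pointwise operations because negligible nets form an ideal of the moderate ones.\<close>

lemma add_cls:
  assumes A: "moderate U A" and B: "moderate U B"
  shows "cls U A \<oplus>\<^bsub>Chat U\<^esub> cls U B = cls U (\<lambda>\<phi>. A \<phi> + B \<phi>)"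
proof -
  have "(\<exists>A'\<in>cls U A. \<exists>B'\<in>cls U B. negligible_net U (\<lambda>\<phi>. C \<phi> - (A' \<phi> + B' \<phi>)))
        \<longleftrightarrow> negligible_net U (\<lambda>\<phi>. C \<phi> - (A \<phi> + B \<phi>))" for C
  proof
    assume "\<exists>A'\<in>cls U A. \<exists>B'\<in>cls U B. negligible_net U (\<lambda>\<phi>. C \<phi> - (A' \<phi> + B' \<phi>))"
    then obtain A' B' where a: "A' \<in> cls U A" and b: "B' \<in> cls U B"
      and c: "negligible_net U (\<lambda>\<phi>. C \<phi> - (A' \<phi> + B' \<phi>))" by blast
    have "negligible_net U (\<lambda>\<phi>. (C \<phi> - (A' \<phi> + B' \<phi>)) + ((A' \<phi> - A \<phi>) + (B' \<phi> - B \<phi>)))"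
      using negligible_add[OF c negligible_add[OF negligible_diff_if_in_cls[OF a]
          negligible_diff_if_in_cls[OF b]]] .
    thus "negligible_net U (\<lambda>\<phi>. C \<phi> - (A \<phi> + B \<phi>))" by (simp add: algebra_simps)
  qed (use cls_refl[OF A] cls_refl[OF B] in blast)
  thus ?thesis by (simp add: Chat_def cls_def)
qed

lemma mult_cls:
  assumes A: "moderate U A" and B: "moderate U B"
  shows "cls U A \<otimes>\<^bsub>Chat U\<^esub> cls U B = cls U (\<lambda>\<phi>. A \<phi> * B \<phi>)"
proof -
  have "(\<exists>A'\<in>cls U A. \<exists>B'\<in>cls U B. negligible_net U (\<lambda>\<phi>. C \<phi> - A' \<phi> * B' \<phi>))
        \<longleftrightarrow> negligible_net U (\<lambda>\<phi>. C \<phi> - A \<phi> * B \<phi>)" for C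
  proof
    assume "\<exists>A'\<in>cls U A. \<exists>B'\<in>cls U B. negligible_net U (\<lambda>\<phi>. C \<phi> - A' \<phi> * B' \<phi>)"
    then obtain A' B' where a: "A' \<in> cls U A" and b: "B' \<in> cls U B"
      and c: "negligible_net U (\<lambda>\<phi>. C \<phi> - A' \<phi> * B' \<phi>)" by blast
    have "negligible_net U (\<lambda>\<phi>. B' \<phi> * (A' \<phi> - A \<phi>))"
      by (rule negligible_mult[OF moderate_if_in_cls[OF b] negligible_diff_if_in_cls[OF a]])
    moreover have "negligible_net U (\<lambda>\<phi>. A \<phi> * (B' \<phi> - B \<phi>))"
      by (rule negligible_mult[OF A negligible_diff_if_in_cls[OF b]])
    ultimately have "negligible_net U
        (\<lambda>\<phi>. (C \<phi> - A' \<phi> * B' \<phi>) + (B' \<phi> * (A' \<phi> - A \<phi>) + A \<phi> * (B' \<phi> - B \<phi>)))"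
      by (intro negligible_add c)
    thus "negligible_net U (\<lambda>\<phi>. C \<phi> - A \<phi> * B \<phi>)" by (simp add: algebra_simps)
  qed (use cls_refl[OF A] cls_refl[OF B] in blast)
  thus ?thesis by (simp add: Chat_def cls_def)
qed

lemma Chat_cring: "cring (Chat U)"
proof (rule cringI)
  show "abelian_group (Chat U)"
  proof (rule abelian_groupI)
    fix x y assume "x \<in> carrier (Chat U)" "y \<in> carrier (Chat U)"
    then show "x \<oplus>\<^bsub>Chat U\<^esub> y \<in> carrier (Chat U)"
      by (auto elim!: ChatE simp: add_cls intro!: cls_in_carrier_Chat moderate_intros)
  next
    show "\<zero>\<^bsub>Chat U\<^esub> \<in> carrier (Chat U)" by (simp add: zero_Chat cls_in_carrier_Chat moderate_const)
  next
    fix x y z assume "x \<in> carrier (Chat U)" "y \<in> carrier (Chat U)" "z \<in> carrier (Chat U)"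
    then show "x \<oplus>\<^bsub>Chat U\<^esub> y \<oplus>\<^bsub>Chat U\<^esub> z = x \<oplus>\<^bsub>Chat U\<^esub> (y \<oplus>\<^bsub>Chat U\<^esub> z)"
      by (auto elim!: ChatE simp: add_cls moderate_intros add.assoc)
  next
    fix x y assume "x \<in> carrier (Chat U)" "y \<in> carrier (Chat U)"
    then show "x \<oplus>\<^bsub>Chat U\<^esub> y = y \<oplus>\<^bsub>Chat U\<^esub> x"
      by (auto elim!: ChatE simp: add_cls add.commute)
  next
    fix x assume "x \<in> carrier (Chat U)"
    then show "\<zero>\<^bsub>Chat U\<^esub> \<oplus>\<^bsub>Chat U\<^esub> x = x"
      by (auto elim!: ChatE simp: add_cls zero_Chat moderate_const)
  next
    fix x assume "x \<in> carrier (Chat U)"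
    then obtain A where A: "moderate U A" "x = cls U A" by (rule ChatE)
    then have "cls U (\<lambda>\<phi>. - A \<phi>) \<oplus>\<^bsub>Chat U\<^esub> x = \<zero>\<^bsub>Chat U\<^esub>"
      by (simp add: add_cls moderate_uminus zero_Chat)
    with A show "\<exists>y\<in>carrier (Chat U). y \<oplus>\<^bsub>Chat U\<^esub> x = \<zero>\<^bsub>Chat U\<^esub>"
      by (blast intro: cls_in_carrier_Chat moderate_uminus)
  qed
next
  show "comm_monoid (Chat U)"
  proof (rule comm_monoidI)
    fix x y assume "x \<in> carrier (Chat U)" "y \<in> carrier (Chat U)"
    then show "x \<otimes>\<^bsub>Chat U\<^esub> y \<in> carrier (Chat U)"
      by (auto elim!: ChatE simp: mult_cls intro!: cls_in_carrier_Chat moderate_intros)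
  next
    show "\<one>\<^bsub>Chat U\<^esub> \<in> carrier (Chat U)" by (simp add: one_Chat cls_in_carrier_Chat moderate_const)
  next
    fix x y z assume "x \<in> carrier (Chat U)" "y \<in> carrier (Chat U)" "z \<in> carrier (Chat U)"
    then show "x \<otimes>\<^bsub>Chat U\<^esub> y \<otimes>\<^bsub>Chat U\<^esub> z = x \<otimes>\<^bsub>Chat U\<^esub> (y \<otimes>\<^bsub>Chat U\<^esub> z)"
      by (auto elim!: ChatE simp: mult_cls moderate_intros mult.assoc)
  next
    fix x assume "x \<in> carrier (Chat U)"
    then show "\<one>\<^bsub>Chat U\<^esub> \<otimes>\<^bsub>Chat U\<^esub> x = x"
      by (auto elim!: ChatE simp: mult_cls one_Chat moderate_const)
  next
    fix x y assume "x \<in> carrier (Chat U)" "y \<in> carrier (Chat U)"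
    then show "x \<otimes>\<^bsub>Chat U\<^esub> y = y \<otimes>\<^bsub>Chat U\<^esub> x"
      by (auto elim!: ChatE simp: mult_cls mult.commute)
  qed
next
  fix x y z assume "x \<in> carrier (Chat U)" "y \<in> carrier (Chat U)" "z \<in> carrier (Chat U)"
  then show "(x \<oplus>\<^bsub>Chat U\<^esub> y) \<otimes>\<^bsub>Chat U\<^esub> z = x \<otimes>\<^bsub>Chat U\<^esub> z \<oplus>\<^bsub>Chat U\<^esub> y \<otimes>\<^bsub>Chat U\<^esub> z"
    by (auto elim!: ChatE simp: mult_cls add_cls moderate_intros distrib_right)
qed

lemma one_not_negligible: "\<not> negligible_net U (\<lambda>_. 1)"
proof
  assume "negligible_net U (\<lambda>_. 1)"
  then have "\<forall>\<^sub>F \<phi> in ufilter. norm (1::complex) < Rphi \<phi> ^ 0" unfolding negligible_iff by blast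
  with ufilter_neq_bot show False by simp
qed

lemma cls_inverse:
  assumes "moderate U A" "\<not> negligible_net U A"
  shows "moderate U (\<lambda>\<phi>. inverse (A \<phi>))"
    and "cls U A \<otimes>\<^bsub>Chat U\<^esub> cls U (\<lambda>\<phi>. inverse (A \<phi>)) = \<one>\<^bsub>Chat U\<^esub>"
proof -
  obtain q where q: "\<forall>\<^sub>F \<phi> in ufilter. Rphi \<phi> ^ q \<le> norm (A \<phi>)"
    using assms(2) by (rule bounded_below_if_not_negligible)
  show inv: "moderate U (\<lambda>\<phi>. inverse (A \<phi>))" by (rule moderate_inverse_if_bounded_below[OF q])
  have "\<forall>\<^sub>F \<phi> in ufilter. A \<phi> * inverse (A \<phi>) = 1"
    using eventually_nonzero_if_bounded_below[OF q] by eventually_elim simp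
  then have "cls U (\<lambda>\<phi>. A \<phi> * inverse (A \<phi>)) = cls U (\<lambda>_. 1)"
    using assms(1) inv by (intro cls_eqI moderate_intros)
  then show "cls U A \<otimes>\<^bsub>Chat U\<^esub> cls U (\<lambda>\<phi>. inverse (A \<phi>)) = \<one>\<^bsub>Chat U\<^esub>"
    using assms(1) inv by (simp add: mult_cls one_Chat)
qed

lemma Chat_field: "field (Chat U)"
proof (rule cring.field_intro2[OF Chat_cring])
  show "\<zero>\<^bsub>Chat U\<^esub> \<noteq> \<one>\<^bsub>Chat U\<^esub>"
    using one_not_negligible cls_eq_zero_iff[OF moderate_const] by (metis one_Chat zero_Chat)
next
  fix x assume x: "x \<in> carrier (Chat U) - {\<zero>\<^bsub>Chat U\<^esub>}"
  then obtain A where A: "moderate U A" "x = cls U A" by (auto elim: ChatE)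
  with x have nn: "\<not> negligible_net U A" using cls_eq_zero_iff zero_Chat by auto
  note inv = cls_inverse[OF A(1) nn]
  have "cls U (\<lambda>\<phi>. inverse (A \<phi>)) \<otimes>\<^bsub>Chat U\<^esub> x = \<one>\<^bsub>Chat U\<^esub>"
    using inv A by (simp add: mult_cls mult.commute)
  with A(2) inv show "x \<in> Units (Chat U)"
    unfolding Units_def by (blast intro: cls_in_carrier_Chat A(1))
qed

interpretation C: field "Chat U"
  by (rule Chat_field)

section \<open>Roots of polynomials over \<open>Chat\<close>\<close>

lemma pow_cls: "moderate U Z \<Longrightarrow> cls U Z [^]\<^bsub>Chat U\<^esub> n = cls U (\<lambda>\<phi>. Z \<phi> ^ n)"
  by (induction n) (simp_all add: one_Chat mult_cls moderate_power mult.commute)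

lemma eval_cls:
  "\<forall>A\<in>set As. moderate U A \<Longrightarrow> moderate U Z \<Longrightarrow>
   C.eval (map (cls U) As) (cls U Z) = cls U (\<lambda>\<phi>. eval_coeffs (map (\<lambda>A. A \<phi>) As) (Z \<phi>))"
  by (induction As)
     (simp_all add: zero_Chat pow_cls mult_cls add_cls moderate_power moderate_mult moderate_eval_coeffs)

lemma lift_coeffs:
  assumes "polynomial\<^bsub>Chat U\<^esub> (cls U ` M) p" "p \<noteq> []" "M \<subseteq> {A. moderate U A}"
  obtains A0 Bs where "A0 \<in> M" "\<not> negligible_net U A0" "set Bs \<subseteq> M" "p = map (cls U) (A0 # Bs)"
proof -
  obtain As where As: "set As \<subseteq> M" "p = map (cls U) As"
    using assms(1,2) obtain_map_preimage[of p "cls U" M] by (auto simp: polynomial_def)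
  then obtain A0 Bs where AB: "As = A0 # Bs" using assms(2) by (cases As) auto
  have "cls U A0 \<noteq> cls U (\<lambda>_. 0)"
    using assms(1,2) As AB by (auto simp: polynomial_def zero_Chat)
  moreover have "A0 \<in> M" using As AB by simp
  ultimately have "\<not> negligible_net U A0" using cls_eq_zero_iff assms(3) by blast
  with that show ?thesis using As AB \<open>A0 \<in> M\<close> by simp
qed

text \<open>Cauchy's bound \<open>|z| \<le> 1 + \<Sum>|b\<^sub>i| / |a\<^sub>0|\<close> is moderate because \<open>1 / |a\<^sub>0|\<close> is.\<close>

lemma moderate_if_eventually_root:
  assumes Bs: "\<forall>B\<in>set Bs. moderate U B"
    and q: "\<forall>\<^sub>F \<phi> in ufilter. Rphi \<phi> ^ q \<le> norm (A0 \<phi>)"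
    and root: "\<forall>\<^sub>F \<phi> in ufilter. eval_coeffs (A0 \<phi> # map (\<lambda>B. B \<phi>) Bs) (Z \<phi>) = 0"
  shows "moderate U Z"
proof (rule moderate_mono)
  define S where "S \<phi> = sum_list (map (\<lambda>B. norm (B \<phi>)) Bs)" for \<phi>
  show "moderate U (\<lambda>\<phi>. 1 + complex_of_real (S \<phi>) * complex_of_real (norm (inverse (A0 \<phi>))))"
    unfolding S_def
    by (intro moderate_intros moderate_sum_list_norm moderate_of_real_norm
        moderate_inverse_if_bounded_below[OF q] Bs)
  have S_nonneg: "0 \<le> S \<phi>" for \<phi> unfolding S_def by (intro sum_list_nonneg) auto
  from eventually_nonzero_if_bounded_below[OF q] root
  show "\<forall>\<^sub>F \<phi> in ufilter.
    norm (Z \<phi>) \<le> norm (1 + complex_of_real (S \<phi>) * complex_of_real (norm (inverse (A0 \<phi>))))"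
  proof eventually_elim
    case (elim \<phi>)
    then have "norm (Z \<phi>) \<le> 1 + S \<phi> * norm (inverse (A0 \<phi>))"
      using norm_root_le_Cauchy_bound[of "A0 \<phi>" "map (\<lambda>B. B \<phi>) Bs" "Z \<phi>"]
      by (simp add: S_def o_def norm_inverse divide_inverse)
    also have "\<dots> = norm (complex_of_real (1 + S \<phi> * norm (inverse (A0 \<phi>))))"
      using S_nonneg[of \<phi>] by (simp only: norm_of_real) simp
    finally show ?case by simp
  qed
qed

lemma root_in_Chat:
  fixes T :: "complex set"
  assumes A0: "moderate U A0" "\<not> negligible_net U A0" and Bs: "\<forall>B\<in>set Bs. moderate U B"
    and "0 \<in> T"
    and roots: "\<And>\<phi>. A0 \<phi> \<noteq> 0 \<Longrightarrow> \<exists>z\<in>T. eval_coeffs (A0 \<phi> # map (\<lambda>B. B \<phi>) Bs) z = 0"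
  obtains Z where "moderate U Z" "\<forall>\<phi>. Z \<phi> \<in> T"
    "C.eval (map (cls U) (A0 # Bs)) (cls U Z) = \<zero>\<^bsub>Chat U\<^esub>"
proof -
  have "\<exists>Z. \<forall>\<phi>. Z \<phi> \<in> T \<and> (A0 \<phi> \<noteq> 0 \<longrightarrow> eval_coeffs (A0 \<phi> # map (\<lambda>B. B \<phi>) Bs) (Z \<phi>) = 0)"
    by (intro choice allI) (use roots \<open>0 \<in> T\<close> in blast)
  then obtain Z where Z: "\<And>\<phi>. Z \<phi> \<in> T"
    and root: "\<And>\<phi>. A0 \<phi> \<noteq> 0 \<Longrightarrow> eval_coeffs (A0 \<phi> # map (\<lambda>B. B \<phi>) Bs) (Z \<phi>) = 0"
    by blast
  obtain q where q: "\<forall>\<^sub>F \<phi> in ufilter. Rphi \<phi> ^ q \<le> norm (A0 \<phi>)"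
    using A0(2) by (rule bounded_below_if_not_negligible)
  have ev_root: "\<forall>\<^sub>F \<phi> in ufilter. eval_coeffs (A0 \<phi> # map (\<lambda>B. B \<phi>) Bs) (Z \<phi>) = 0"
    using eventually_nonzero_if_bounded_below[OF q] by eventually_elim (rule root)
  have mZ: "moderate U Z" by (rule moderate_if_eventually_root[OF Bs q ev_root])
  have "C.eval (map (cls U) (A0 # Bs)) (cls U Z)
      = cls U (\<lambda>\<phi>. eval_coeffs (map (\<lambda>A. A \<phi>) (A0 # Bs)) (Z \<phi>))"
    using A0 Bs mZ by (intro eval_cls) auto
  also have "\<dots> = cls U (\<lambda>_. 0)"
    using A0 Bs mZ ev_root by (intro cls_eqI moderate_eval_coeffs moderate_const) auto
  finally show ?thesis using that mZ Z zero_Chat by auto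
qed

lemma Chat_algebraically_closed: "algebraically_closed (Chat U)"
proof (rule C.algebraically_closedI)
  fix p assume p: "p \<in> carrier (poly_ring (Chat U))" and deg: "Polynomials.degree p > 1"
  then have "polynomial\<^bsub>Chat U\<^esub> (cls U ` {A. moderate U A}) p" "p \<noteq> []"
    by (auto simp: univ_poly_carrier carrier_Chat)
  then obtain A0 Bs where A0: "moderate U A0" "\<not> negligible_net U A0"
    and Bs: "\<forall>B\<in>set Bs. moderate U B" and p_eq: "p = map (cls U) (A0 # Bs)"
    by (rule lift_coeffs) auto
  have "Bs \<noteq> []" using deg p_eq by auto
  obtain Z where "moderate U Z" "C.eval p (cls U Z) = \<zero>\<^bsub>Chat U\<^esub>"
  proof (rule root_in_Chat[OF A0 Bs, of UNIV])
    fix \<phi> assume "A0 \<phi> \<noteq> 0"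
    then show "\<exists>z\<in>UNIV. eval_coeffs (A0 \<phi> # map (\<lambda>B. B \<phi>) Bs) z = 0"
      using eval_coeffs_complex_root_exists[of "A0 \<phi>" "map (\<lambda>B. B \<phi>) Bs"] \<open>Bs \<noteq> []\<close> by simp
  qed (use p_eq in auto)
  then show "\<exists>x\<in>carrier (Chat U). C.eval p x = \<zero>\<^bsub>Chat U\<^esub>"
    using cls_in_carrier_Chat by blast
qed

section \<open>The real closed subfield\<close>

abbreviation Rfield :: "'d net set ring" where
  "Rfield \<equiv> (Chat U)\<lparr>carrier := Rhat U\<rparr>"

lemma RhatE:
  assumes "x \<in> Rhat U"
  obtains A where "moderate U A" "\<forall>\<phi>. A \<phi> \<in> \<real>" "x = cls U A"
  using assms by (auto simp: Rhat_def)

lemma cls_in_Rhat: "moderate U A \<Longrightarrow> \<forall>\<phi>. A \<phi> \<in> \<real> \<Longrightarrow> cls U A \<in> Rhat U"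
  by (auto simp: Rhat_def)

lemma minus_cls: "moderate U A \<Longrightarrow> \<ominus>\<^bsub>Chat U\<^esub> cls U A = cls U (\<lambda>\<phi>. - A \<phi>)"
  by (rule C.minus_equality) (simp_all add: add_cls moderate_uminus zero_Chat cls_in_carrier_Chat)

lemma Rhat_subring: "subring (Rhat U) (Chat U)"
proof (rule C.subringI)
  show "Rhat U \<subseteq> carrier (Chat U)" by (auto simp: Rhat_def carrier_Chat)
  show "\<one>\<^bsub>Chat U\<^esub> \<in> Rhat U" by (simp add: one_Chat cls_in_Rhat moderate_const)
next
  fix h assume "h \<in> Rhat U"
  then show "\<ominus>\<^bsub>Chat U\<^esub> h \<in> Rhat U"
    by (auto elim!: RhatE simp: minus_cls intro!: cls_in_Rhat moderate_uminus)
next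
  fix h1 h2 assume "h1 \<in> Rhat U" "h2 \<in> Rhat U"
  then show "h1 \<otimes>\<^bsub>Chat U\<^esub> h2 \<in> Rhat U" and "h1 \<oplus>\<^bsub>Chat U\<^esub> h2 \<in> Rhat U"
    by (auto elim!: RhatE simp: mult_cls add_cls intro!: cls_in_Rhat moderate_mult moderate_add)
qed

lemma Rhat_subfield: "subfield (Rhat U) (Chat U)"
proof (rule C.subfieldI'[OF Rhat_subring])
  fix k assume k: "k \<in> Rhat U - {\<zero>\<^bsub>Chat U\<^esub>}"
  then obtain A where A: "moderate U A" "\<forall>\<phi>. A \<phi> \<in> \<real>" "k = cls U A" by (auto elim: RhatE)
  with k have nn: "\<not> negligible_net U A" using cls_eq_zero_iff zero_Chat by auto
  note inv = cls_inverse[OF A(1) nn]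
  have "inv\<^bsub>Chat U\<^esub> k = cls U (\<lambda>\<phi>. inverse (A \<phi>))"
    using A(1,3) inv by (intro C.comm_inv_char) (auto intro: cls_in_carrier_Chat)
  with A(2) inv show "inv\<^bsub>Chat U\<^esub> k \<in> Rhat U" by (simp add: cls_in_Rhat)
qed

interpretation R: field Rfield
  by (rule C.subfield_iff(2)[OF Rhat_subfield])

lemma Rfield_minus_cls:
  assumes "moderate U A" "\<forall>\<phi>. A \<phi> \<in> \<real>"
  shows "\<ominus>\<^bsub>Rfield\<^esub> cls U A = cls U (\<lambda>\<phi>. - A \<phi>)"
  by (rule R.minus_equality)
     (use assms in \<open>simp_all add: add_cls moderate_uminus zero_Chat cls_in_Rhat\<close>)

lemma Rfield_sum_squares:
  fixes m :: nat
  assumes "f \<in> {..<m} \<rightarrow> Rhat U"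
  shows "\<exists>S. moderate U S \<and> (\<forall>\<phi>. S \<phi> \<in> \<real> \<and> 0 \<le> Re (S \<phi>)) \<and>
           finsum Rfield (\<lambda>k. f k \<otimes>\<^bsub>Rfield\<^esub> f k) {..<m} = cls U S"
  using assms
proof (induction m)
  case 0
  show ?case using moderate_const by (intro exI[of _ "\<lambda>_. 0"]) (simp add: zero_Chat)
next
  case (Suc m)
  then have "f \<in> {..<m} \<rightarrow> Rhat U" by auto
  then obtain S where S: "moderate U S" "\<forall>\<phi>. S \<phi> \<in> \<real> \<and> 0 \<le> Re (S \<phi>)"
    "finsum Rfield (\<lambda>k. f k \<otimes>\<^bsub>Rfield\<^esub> f k) {..<m} = cls U S"
    using Suc.IH by blast
  have "f m \<in> Rhat U" using Suc.prems by auto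
  then obtain F where F: "moderate U F" "\<forall>\<phi>. F \<phi> \<in> \<real>" "f m = cls U F"
    by (rule RhatE)
  have squares_closed: "(\<lambda>k. f k \<otimes>\<^bsub>Rfield\<^esub> f k) \<in> {..<Suc m} \<rightarrow> carrier Rfield"
    using Suc.prems R.m_closed by auto
  have "finsum Rfield (\<lambda>k. f k \<otimes>\<^bsub>Rfield\<^esub> f k) {..<Suc m}
      = (f m \<otimes>\<^bsub>Rfield\<^esub> f m) \<oplus>\<^bsub>Rfield\<^esub> finsum Rfield (\<lambda>k. f k \<otimes>\<^bsub>Rfield\<^esub> f k) {..<m}"
    unfolding lessThan_Suc
    by (rule R.finsum_insert) (use squares_closed in auto)
  also have "\<dots> = cls U (\<lambda>\<phi>. F \<phi> * F \<phi> + S \<phi>)"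
    using S F by (simp add: mult_cls add_cls moderate_mult)
  finally have sum_eq: "finsum Rfield (\<lambda>k. f k \<otimes>\<^bsub>Rfield\<^esub> f k) {..<Suc m} = cls U (\<lambda>\<phi>. F \<phi> * F \<phi> + S \<phi>)" .
  have "F \<phi> * F \<phi> + S \<phi> \<in> \<real> \<and> 0 \<le> Re (F \<phi> * F \<phi> + S \<phi>)" for \<phi>
  proof -
    obtain r where "F \<phi> = of_real r" using F(2) Reals_cases by blast
    then show ?thesis using S(2) by simp
  qed
  with sum_eq S(1) F(1) show ?case by (blast intro: moderate_add moderate_mult)
qed

lemma Rfield_formally_real:
  fixes m :: nat
  assumes "f \<in> {..<m} \<rightarrow> Rhat U"
  shows "finsum Rfield (\<lambda>k. f k \<otimes>\<^bsub>Rfield\<^esub> f k) {..<m} \<noteq> \<ominus>\<^bsub>Rfield\<^esub> \<one>\<^bsub>Rfield\<^esub>"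
proof
  obtain S where S: "moderate U S" "\<forall>\<phi>. S \<phi> \<in> \<real> \<and> 0 \<le> Re (S \<phi>)"
    "finsum Rfield (\<lambda>k. f k \<otimes>\<^bsub>Rfield\<^esub> f k) {..<m} = cls U S"
    using Rfield_sum_squares[OF assms] by blast
  assume "finsum Rfield (\<lambda>k. f k \<otimes>\<^bsub>Rfield\<^esub> f k) {..<m} = \<ominus>\<^bsub>Rfield\<^esub> \<one>\<^bsub>Rfield\<^esub>"
  also have "\<ominus>\<^bsub>Rfield\<^esub> \<one>\<^bsub>Rfield\<^esub> = cls U (\<lambda>_. - 1)"
    using Rfield_minus_cls[of "\<lambda>_. 1"] by (simp add: one_Chat moderate_const)
  finally have "cls U S = cls U (\<lambda>_. - 1)" using S(3) by simp
  then have "negligible_net U (\<lambda>\<phi>. S \<phi> + 1)"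
    using cls_eq_iff[OF S(1) moderate_const] by simp
  then have ev: "\<forall>\<^sub>F \<phi> in ufilter. norm (S \<phi> + 1) < Rphi \<phi> ^ 0"
    unfolding negligible_iff by blast
  have not_small: "\<not> norm (S \<phi> + 1) < Rphi \<phi> ^ 0" for \<phi>
  proof -
    have "0 \<le> Re (S \<phi>)" using S(2) by blast
    then show ?thesis using complex_Re_le_cmod[of "S \<phi> + 1"] by simp
  qed
  from ev have "\<forall>\<^sub>F \<phi> in ufilter. False"
    by eventually_elim (use not_small in blast)
  with ufilter_neq_bot show False ..
qed

lemma Rfield_square_or_minus_square:
  assumes "a \<in> Rhat U"
  shows "\<exists>b\<in>Rhat U. b \<otimes>\<^bsub>Rfield\<^esub> b = a \<or> b \<otimes>\<^bsub>Rfield\<^esub> b = \<ominus>\<^bsub>Rfield\<^esub> a"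
proof -
  obtain A where A: "moderate U A" "\<forall>\<phi>. A \<phi> \<in> \<real>" "a = cls U A" using assms by (rule RhatE)
  define B where "B \<phi> = complex_of_real (sqrt \<bar>Re (A \<phi>)\<bar>)" for \<phi>
  have "moderate U B"
  proof (rule moderate_mono)
    show "moderate U (\<lambda>\<phi>. 1 + complex_of_real (norm (A \<phi>)))"
      by (intro moderate_intros moderate_of_real_norm A(1))
    have "sqrt \<bar>Re (A \<phi>)\<bar> \<le> 1 + norm (A \<phi>)" for \<phi>
    proof (rule real_le_lsqrt)
      have "norm (A \<phi>) \<le> (1 + norm (A \<phi>))\<^sup>2" by (simp add: power2_eq_square algebra_simps)
      then show "\<bar>Re (A \<phi>)\<bar> \<le> (1 + norm (A \<phi>))\<^sup>2" using abs_Re_le_cmod by (rule order.trans[rotated])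
    qed simp
    moreover have "norm (1 + complex_of_real (norm (A \<phi>))) = 1 + norm (A \<phi>)" for \<phi>
      by (simp add: cmod_def)
    ultimately show "\<forall>\<^sub>F \<phi> in ufilter. norm (B \<phi>) \<le> norm (1 + complex_of_real (norm (A \<phi>)))"
      by (simp add: B_def)
  qed
  then have b: "cls U B \<in> Rhat U" and bb: "cls U B \<otimes>\<^bsub>Rfield\<^esub> cls U B = cls U (\<lambda>\<phi>. B \<phi> * B \<phi>)"
    by (auto simp: B_def mult_cls intro: cls_in_Rhat)
  have BB: "B \<phi> * B \<phi> = (if 0 \<le> Re (A \<phi>) then A \<phi> else - A \<phi>)" for \<phi>
  proof -
    obtain r where r: "A \<phi> = complex_of_real r" using A(2) Reals_cases by blast
    have "B \<phi> * B \<phi> = complex_of_real \<bar>r\<bar>"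
      unfolding B_def r of_real_mult[symmetric] by simp
    then show ?thesis using r by simp
  qed
  text \<open>The ultrafilter decides the sign of the real net \<open>A\<close>.\<close>
  from ufilter_ultra[of "\<lambda>\<phi>. 0 \<le> Re (A \<phi>)"] show ?thesis
  proof
    assume "\<forall>\<^sub>F \<phi> in ufilter. 0 \<le> Re (A \<phi>)"
    then have "cls U (\<lambda>\<phi>. B \<phi> * B \<phi>) = a"
      unfolding A(3) using \<open>moderate U B\<close> A(1)
      by (intro cls_eqI moderate_mult) (auto simp: BB elim: eventually_mono)
    then show ?thesis using b bb by auto
  next
    assume "\<forall>\<^sub>F \<phi> in ufilter. \<not> 0 \<le> Re (A \<phi>)"
    then have "cls U (\<lambda>\<phi>. B \<phi> * B \<phi>) = \<ominus>\<^bsub>Rfield\<^esub> a"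
      unfolding A(3) Rfield_minus_cls[OF A(1,2)] using \<open>moderate U B\<close> A(1)
      by (intro cls_eqI moderate_mult moderate_uminus) (auto simp: BB elim: eventually_mono)
    then show ?thesis using b bb by auto
  qed
qed

lemma Rfield_odd_degree_root:
  assumes p: "p \<in> carrier (poly_ring Rfield)" and odd: "odd (Polynomials.degree p)"
  shows "\<exists>x\<in>Rhat U. ring.eval Rfield p x = \<zero>\<^bsub>Rfield\<^esub>"
proof -
  let ?M = "{A. moderate U A \<and> (\<forall>\<phi>. A \<phi> \<in> \<real>)}"
  have "polynomial\<^bsub>Rfield\<^esub> (Rhat U) p" using p by (simp add: univ_poly_carrier)
  then have "polynomial\<^bsub>Chat U\<^esub> (cls U ` ?M) p" by (simp add: polynomial_def Rhat_def)
  moreover have "p \<noteq> []" using odd by auto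
  ultimately obtain A0 Bs where A0: "A0 \<in> ?M" "\<not> negligible_net U A0"
    and Bs: "set Bs \<subseteq> ?M" and p_eq: "p = map (cls U) (A0 # Bs)"
    by (rule lift_coeffs) auto
  have odd_Bs: "odd (length Bs)" using odd p_eq by simp
  have real_roots: "\<exists>z\<in>\<real>. eval_coeffs (A0 \<phi> # map (\<lambda>B. B \<phi>) Bs) z = 0"
    if "A0 \<phi> \<noteq> 0" for \<phi>
  proof -
    let ?re = "Re (A0 \<phi>) # map (\<lambda>B. Re (B \<phi>)) Bs"
    have "map (\<lambda>B. B \<phi>) Bs = map (\<lambda>B. of_real (Re (B \<phi>))) Bs"
      using Bs by (intro map_cong) auto
    then have coeffs: "A0 \<phi> # map (\<lambda>B. B \<phi>) Bs = map of_real ?re"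
      using A0(1) by simp
    then have "Re (A0 \<phi>) \<noteq> 0" using that by auto
    then obtain x where "eval_coeffs ?re x = 0"
      using eval_coeffs_real_root_exists[of "Re (A0 \<phi>)" "map (\<lambda>B. Re (B \<phi>)) Bs"] odd_Bs
      by auto
    then have "eval_coeffs (A0 \<phi> # map (\<lambda>B. B \<phi>) Bs) (of_real x) = 0"
      unfolding coeffs eval_coeffs_of_real by simp
    then show ?thesis using Reals_of_real by blast
  qed
  have mA0: "moderate U A0" and mBs: "\<forall>B\<in>set Bs. moderate U B" using A0(1) Bs by auto
  obtain Z where "moderate U Z" "\<forall>\<phi>. Z \<phi> \<in> \<real>"
    "C.eval (map (cls U) (A0 # Bs)) (cls U Z) = \<zero>\<^bsub>Chat U\<^esub>"
    by (rule root_in_Chat[OF mA0 A0(2) mBs Reals_0 real_roots])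
  moreover have "ring.eval Rfield p (cls U Z) = C.eval p (cls U Z)"
    by (simp add: C.eval_consistent[OF Rhat_subring])
  ultimately show ?thesis using p_eq cls_in_Rhat by auto
qed

lemma Rfield_real_closed: "real_closed Rfield"
  unfolding real_closed_def
proof (intro conjI allI impI ballI)
  fix m :: nat and f assume "f \<in> {..<m} \<rightarrow> carrier Rfield"
  then show "finsum Rfield (\<lambda>k. f k \<otimes>\<^bsub>Rfield\<^esub> f k) {..<m} \<noteq> \<ominus>\<^bsub>Rfield\<^esub> \<one>\<^bsub>Rfield\<^esub>"
    using Rfield_formally_real by simp
qed (use R.field_axioms Rfield_square_or_minus_square Rfield_odd_degree_root in simp_all)

lemma Chat_eq_Rhat_plus_i_Rhat:
  assumes x: "x \<in> carrier (Chat U)"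
  shows "\<exists>!ab. fst ab \<in> Rhat U \<and> snd ab \<in> Rhat U \<and>
            x = fst ab \<oplus>\<^bsub>Chat U\<^esub> (cls U (\<lambda>_. \<i>) \<otimes>\<^bsub>Chat U\<^esub> snd ab)"
proof -
  obtain A where A: "moderate U A" "x = cls U A" using x by (rule ChatE)
  define ReA where "ReA \<phi> = complex_of_real (Re (A \<phi>))" for \<phi>
  define ImA where "ImA \<phi> = complex_of_real (Im (A \<phi>))" for \<phi>
  have mRe: "moderate U ReA" and mIm: "moderate U ImA"
    unfolding ReA_def ImA_def using A(1) by (rule moderate_of_real_Re, rule moderate_of_real_Im)
  have combine: "cls U A1 \<oplus>\<^bsub>Chat U\<^esub> (cls U (\<lambda>_. \<i>) \<otimes>\<^bsub>Chat U\<^esub> cls U B1) = cls U (\<lambda>\<phi>. A1 \<phi> + \<i> * B1 \<phi>)"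
    if "moderate U A1" "moderate U B1" for A1 B1
    using that by (simp add: mult_cls add_cls moderate_intros)
  show ?thesis
  proof (rule ex1I[of _ "(cls U ReA, cls U ImA)"])
    have "(\<lambda>\<phi>. ReA \<phi> + \<i> * ImA \<phi>) = A"
      by (rule ext) (simp add: ReA_def ImA_def complex_eq[symmetric])
    then show "fst (cls U ReA, cls U ImA) \<in> Rhat U \<and> snd (cls U ReA, cls U ImA) \<in> Rhat U \<and>
        x = fst (cls U ReA, cls U ImA) \<oplus>\<^bsub>Chat U\<^esub> (cls U (\<lambda>_. \<i>) \<otimes>\<^bsub>Chat U\<^esub> snd (cls U ReA, cls U ImA))"
      using combine[OF mRe mIm] mRe mIm A by (simp add: cls_in_Rhat ReA_def ImA_def)
  next
    fix ab assume h: "fst ab \<in> Rhat U \<and> snd ab \<in> Rhat U \<and>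
        x = fst ab \<oplus>\<^bsub>Chat U\<^esub> (cls U (\<lambda>_. \<i>) \<otimes>\<^bsub>Chat U\<^esub> snd ab)"
    obtain A1 B1 where A1: "moderate U A1" "\<forall>\<phi>. A1 \<phi> \<in> \<real>" "fst ab = cls U A1"
      and B1: "moderate U B1" "\<forall>\<phi>. B1 \<phi> \<in> \<real>" "snd ab = cls U B1"
      using h by (auto elim!: RhatE)
    have "cls U (\<lambda>\<phi>. A1 \<phi> + \<i> * B1 \<phi>) = cls U A" using h A1 B1 combine A by simp
    then have diff: "negligible_net U (\<lambda>\<phi>. A1 \<phi> + \<i> * B1 \<phi> - A \<phi>)"
      using cls_eq_iff A1(1) B1(1) A(1) by (simp add: moderate_intros)
    have "negligible_net U (\<lambda>\<phi>. A1 \<phi> - ReA \<phi>)" "negligible_net U (\<lambda>\<phi>. B1 \<phi> - ImA \<phi>)"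
      using A1(2) B1(2) norm_Re_Im_diff_le
      by (auto intro!: negligible_mono[OF diff] simp: ReA_def ImA_def)
    then have "cls U A1 = cls U ReA" "cls U B1 = cls U ImA"
      using cls_eq_iff A1(1) B1(1) mRe mIm by blast+
    then show "ab = (cls U ReA, cls U ImA)" using A1(3) B1(3) by (simp add: prod_eq_iff)
  qed
qed

end

theorem theorem4p2:
  fixes U :: "('d::finite) tf set set"
  assumes "free_ultrafilter_on testfns U"
    and "\<forall>n::nat. n \<ge> 1 \<longrightarrow> Dn n \<in> U"
    and "cplus_good testfns U"
  shows "algebraically_closed (Chat U)
       \<and> subfield (Rhat U) (Chat U)
       \<and> real_closed ((Chat U)\<lparr>carrier := Rhat U\<rparr>)
       \<and> (\<forall>x\<in>carrier (Chat U). \<exists>!ab. fst ab \<in> Rhat U \<and> snd ab \<in> Rhat U \<and>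
            x = fst ab \<oplus>\<^bsub>Chat U\<^esub> (cls U (\<lambda>_. \<i>) \<otimes>\<^bsub>Chat U\<^esub> snd ab))"
proof -
  interpret Dn_ultrafilter U
    using assms(1,2) by unfold_locales
  show ?thesis
    using Chat_algebraically_closed Rhat_subfield Rfield_real_closed Chat_eq_Rhat_plus_i_Rhat
    by blast
qed

end
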